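(* Let $K$ be a non-archimedean local field ($p$-field), and let $n>0$ be an integer. If $s_1,\dots,s_t\in V$ satisfy $\mathrm{mod}_K\big(d(s_1\cdots s_i)\big)\in[q^{-n},q^n]$ for every $i\in\{1,\dots,t\}$, then $s_1\cdots s_t\in\Omega_n$.
   Context: $\mathrm{mod}_K$ is the module of $K$ (the factor by which multiplication scales a Haar measure of $K$), $q$ the cardinality of the residue field, $\pi$ a uniformizer (so $\mathrm{mod}_K(\pi)=q^{-1}$), $R=\{x\in K:\mathrm{mod}_K(x)\le 1\}$ the ring of integers and $R^*=\{x\in K:\mathrm{mod}_K(x)=1\}$ its group of units. $\mathrm{sol}(K)$ is the group of matrices $\begin{pmatrix} a&0&x\\0&a^{-1}&y\\0&0&1\end{pmatrix}$ with $a\in K^*$, $x,y\in K$, and $d:\mathrm{sol}(K)\to K^*$ sends such a matrix to $a$. $V=V_1\cup V_1^{-1}$ where $V_1$ is the set of such matrices with $a=\pi^{r}u$, $r\in\{-1,0,1\}$, $u\in R^*$, $x,y\in R$. For $n>0$, $\Omega_n$ is the set of such matrices with $\mathrm{mod}_K(a)\in[q^{-n},q^n]$ and $x,y\in\pi^{-n}R$. *)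

theory Defs
  imports "HOL-Analysis.Analysis"
begin

text \<open>A non-archimedean local field (p-field) K is modelled by a field type 'a together with
  its module modK (the normalized absolute value), the cardinality q of the residue field and a
  uniformizer piK: modK is a multiplicative ultrametric absolute value, discretely valued with
  value group q^Z, modK piK = 1/q, K is complete for modK, and the residue field R/m is finite
  of cardinality q.\<close>

definition ring_of_integers :: "('a::field \<Rightarrow> real) \<Rightarrow> 'a set" where
  "ring_of_integers modK = {x. modK x \<le> 1}"

definition units_of_integers :: "('a::field \<Rightarrow> real) \<Rightarrow> 'a set" where
  "units_of_integers modK = {x. modK x = 1}"

definition residue_rel :: "('a::field \<Rightarrow> real) \<Rightarrow> ('a \<times> 'a) set" where
  "residue_rel modK = {(x, y). x \<in> ring_of_integers modK \<and> y \<in> ring_of_integers modK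
                               \<and> modK (x - y) < 1}"

definition nonarch_local_field :: "('a::field \<Rightarrow> real) \<Rightarrow> nat \<Rightarrow> 'a \<Rightarrow> bool" where
  "nonarch_local_field modK q piK \<longleftrightarrow>
     (\<forall>x. 0 \<le> modK x) \<and> (\<forall>x. modK x = 0 \<longleftrightarrow> x = 0) \<and>
     (\<forall>x y. modK (x * y) = modK x * modK y) \<and>
     (\<forall>x y. modK (x + y) \<le> max (modK x) (modK y)) \<and>
     2 \<le> q \<and>
     modK piK = 1 / real q \<and>
     (\<forall>x. x \<noteq> 0 \<longrightarrow> (\<exists>k::int. modK x = real q powi k)) \<and>
     (\<forall>X :: nat \<Rightarrow> 'a.
        (\<forall>e>0. \<exists>N. \<forall>m\<ge>N. \<forall>n\<ge>N. modK (X m - X n) < e) \<longrightarrow>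
        (\<exists>L. \<forall>e>0. \<exists>N. \<forall>n\<ge>N. modK (X n - L) < e)) \<and>
     finite (ring_of_integers modK // residue_rel modK) \<and>
     card (ring_of_integers modK // residue_rel modK) = q"

text \<open>The matrix (a 0 x; 0 a^-1 y; 0 0 1) as a 3x3 matrix (rows/columns indexed 1,2,3).\<close>
definition solmat :: "'a::field \<Rightarrow> 'a \<Rightarrow> 'a \<Rightarrow> 'a^3^3" where
  "solmat a x y = (\<chi> i j.
      if i = 1 then (if j = 1 then a else if j = 3 then x else 0)
      else if i = 2 then (if j = 2 then inverse a else if j = 3 then y else 0)
      else (if j = 3 then 1 else 0))"

definition sol :: "('a::field^3^3) set" where
  "sol = {solmat a x y | a x y. a \<noteq> 0}"

definition dmap :: "'a::field^3^3 \<Rightarrow> 'a" where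
  "dmap M = M $ 1 $ 1"

definition V1 :: "('a::field \<Rightarrow> real) \<Rightarrow> 'a \<Rightarrow> ('a^3^3) set" where
  "V1 modK piK = {solmat (piK powi r * u) x y | r u x y.
      r \<in> {-1, 0, 1} \<and> u \<in> units_of_integers modK \<and>
      x \<in> ring_of_integers modK \<and> y \<in> ring_of_integers modK}"

definition Vset :: "('a::field \<Rightarrow> real) \<Rightarrow> 'a \<Rightarrow> ('a^3^3) set" where
  "Vset modK piK = V1 modK piK \<union> {M \<in> sol. \<exists>N \<in> V1 modK piK. M ** N = mat 1}"

definition Omega :: "('a::field \<Rightarrow> real) \<Rightarrow> nat \<Rightarrow> 'a \<Rightarrow> nat \<Rightarrow> ('a^3^3) set" where
  "Omega modK q piK n = {solmat a x y | a x y. a \<noteq> 0 \<and>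
      modK a \<in> {real q powi (- int n) .. real q ^ n} \<and>
      x \<in> (\<lambda>r. piK powi (- int n) * r) ` ring_of_integers modK \<and>
      y \<in> (\<lambda>r. piK powi (- int n) * r) ` ring_of_integers modK}"

definition matprod :: "('a::field^3^3) list \<Rightarrow> 'a^3^3" where
  "matprod ss = foldr (**) ss (mat 1)"

end

theory Submission imports Defs begin

text \<open>Write \<open>s\<^sub>1\<cdots>s\<^sub>i = (a\<^sub>i, X\<^sub>i, Y\<^sub>i)\<close> in the coordinates of \<open>solmat\<close>. Right multiplication by
  \<open>(b, x, y)\<close> changes the translation part by \<open>(a\<^sub>i x, a\<^sub>i\<^sup>-\<^sup>1 y)\<close>, and every element of \<open>V\<close> has
  \<open>|x| \<le> max 1 |b|\<close> and \<open>|y| \<le> max 1 |b\<^sup>-\<^sup>1|\<close>. Hence \<open>|a\<^sub>i x| \<le> max |a\<^sub>i| |a\<^sub>i\<^sub>+\<^sub>1|\<close> and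
  \<open>|a\<^sub>i\<^sup>-\<^sup>1 y| \<le> max |a\<^sub>i|\<^sup>-\<^sup>1 |a\<^sub>i\<^sub>+\<^sub>1|\<^sup>-\<^sup>1\<close>, both at most \<open>q\<^sup>n\<close> by the hypothesis on the prefixes, and the
  ultrametric inequality keeps \<open>|X\<^sub>i|, |Y\<^sub>i| \<le> q\<^sup>n\<close> along the whole product.\<close>

locale ultrametric_abs =
  fixes absv :: "'a::field \<Rightarrow> real"
  assumes absv_nonneg: "\<And>x. 0 \<le> absv x"
    and absv_eq_0_iff: "\<And>x. absv x = 0 \<longleftrightarrow> x = 0"
    and absv_mult: "\<And>x y. absv (x * y) = absv x * absv y"
    and absv_add_le_max: "\<And>x y. absv (x + y) \<le> max (absv x) (absv y)"
begin

lemma absv_0 [simp]: "absv 0 = 0"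
  by (simp add: absv_eq_0_iff)

lemma absv_1: "absv 1 = 1"
  using absv_mult[of 1 1] absv_eq_0_iff[of 1] by simp

lemma absv_inverse: "absv (inverse x) = inverse (absv x)"
proof (cases "x = 0")
  case False
  then have "absv x * absv (inverse x) = 1"
    by (simp add: absv_1 flip: absv_mult)
  then show ?thesis
    by (simp add: inverse_unique)
qed simp

lemma absv_minus: "absv (- x) = absv x"
proof -
  have "absv (- 1) * absv (- 1) = 1"
    using absv_mult[of "- 1" "- 1"] absv_1 by simp
  then have "absv (- 1) = 1"
    using absv_nonneg[of "- 1"] power2_eq_1_iff[of "absv (- 1)"] by (auto simp: power2_eq_square)
  then show ?thesis
    using absv_mult[of "- 1" x] by simp
qed

lemma absv_power: "absv (x ^ n) = absv x ^ n"
  by (induction n) (simp_all add: absv_1 absv_mult)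

lemma absv_inverse_le:
  assumes "0 < B" and "inverse B \<le> absv x"
  shows "absv (inverse x) \<le> B"
  using assms le_imp_inverse_le[of "inverse B" "absv x"] by (simp add: absv_inverse)

lemma absv_mult_add_le:
  assumes "absv c \<le> B" and "absv (c * e) \<le> B"
    and "absv z \<le> max 1 (absv e)" and "absv Z \<le> B"
  shows "absv (c * z + Z) \<le> B"
proof -
  have "absv (c * z) \<le> absv c * max 1 (absv e)"
    using assms(3) absv_nonneg by (simp add: absv_mult mult_left_mono)
  also have "\<dots> = max (absv c) (absv (c * e))"
    using absv_nonneg by (simp add: absv_mult max_mult_distrib_left)
  finally show ?thesis
    using assms(1,2,4) absv_add_le_max[of "c * z" Z] by linarith
qed

lemma mem_scaled_integers:
  assumes "\<pi> \<noteq> 0" and "absv X \<le> inverse (absv \<pi>) ^ n"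
  shows "X \<in> (\<lambda>r. \<pi> powi (- int n) * r) ` ring_of_integers absv"
proof
  show "X = \<pi> powi (- int n) * (\<pi> ^ n * X)"
    using assms(1) by (simp add: power_int_minus)
  have "absv (\<pi> ^ n * X) \<le> absv \<pi> ^ n * inverse (absv \<pi>) ^ n"
    using assms(2) absv_nonneg by (simp add: absv_mult absv_power mult_left_mono)
  also have "\<dots> = 1"
    using assms(1) absv_eq_0_iff by (simp add: power_mult_distrib[symmetric])
  finally show "\<pi> ^ n * X \<in> ring_of_integers absv"
    by (simp add: ring_of_integers_def)
qed

end

lemma nonarch_local_field_ultrametric_abs:
  "nonarch_local_field modK q piK \<Longrightarrow> ultrametric_abs modK"
  unfolding nonarch_local_field_def by unfold_locales auto

lemma solmat_mult:
  "solmat a x y ** solmat b x' y' = solmat (a * b) (a * x' + x) (inverse a * y' + y)"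
  unfolding matrix_matrix_mult_def solmat_def
  by (simp add: vec_eq_iff forall_3 sum_3 field_simps)

lemma mat_1_eq_solmat: "(mat 1 :: 'a::field^3^3) = solmat 1 0 0"
  unfolding mat_def solmat_def by (simp add: vec_eq_iff forall_3)

lemma solmat_eq_iff: "solmat a x y = solmat b x' y' \<longleftrightarrow> a = b \<and> x = x' \<and> y = y'"
  unfolding solmat_def by (auto simp: vec_eq_iff forall_3)

lemma dmap_solmat [simp]: "dmap (solmat a x y) = a"
  unfolding dmap_def solmat_def by simp

lemma matprod_Nil: "matprod [] = (solmat 1 0 0 :: 'a::field^3^3)"
  by (simp add: matprod_def mat_1_eq_solmat)

lemma matprod_append_single: "matprod (ss @ [s]) = matprod ss ** (s :: 'a::field^3^3)"
proof -
  have "foldr (**) ss M = matprod ss ** M" for M :: "'a^3^3"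
    unfolding matprod_def by (induction ss) (simp_all add: matrix_mul_assoc)
  from this[of "s ** mat 1"] show ?thesis
    by (simp add: matprod_def)
qed

definition translation_dominated :: "('a::field \<Rightarrow> real) \<Rightarrow> 'a^3^3 \<Rightarrow> bool" where
  "translation_dominated modK M \<longleftrightarrow> (\<exists>b x y. M = solmat b x y \<and>
     modK x \<le> max 1 (modK b) \<and> modK y \<le> max 1 (modK (inverse b)))"

context ultrametric_abs
begin

lemma translation_dominated_Vset:
  assumes "M \<in> Vset absv piK"
  shows "translation_dominated absv M"
proof (cases "M \<in> V1 absv piK")
  case True
  then obtain b x y where "M = solmat b x y" "absv x \<le> 1" "absv y \<le> 1"
    by (auto simp: V1_def ring_of_integers_def)
  then show ?thesis
    unfolding translation_dominated_def by fastforce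
next
  case False
  with assms obtain a x y N where M: "M = solmat a x y" "N \<in> V1 absv piK" "M ** N = mat 1"
    by (auto simp: Vset_def sol_def)
  then obtain b x' y' where N: "N = solmat b x' y'" "absv x' \<le> 1" "absv y' \<le> 1"
    by (auto simp: V1_def ring_of_integers_def)
  from M N have "x = - (a * x')" and "y = - (inverse a * y')"
    by (auto simp: solmat_mult mat_1_eq_solmat solmat_eq_iff eq_neg_iff_add_eq_0 add.commute)
  then have "absv x \<le> absv a" and "absv y \<le> absv (inverse a)"
    using N absv_nonneg by (simp_all add: absv_minus absv_mult mult_left_le)
  with M(1) show ?thesis
    unfolding translation_dominated_def by fastforce
qed

lemma matprod_translation_bounded:
  assumes "1 \<le> B"
    and "\<forall>s\<in>set ss. translation_dominated absv s"
    and "\<forall>i\<in>{1..length ss}. absv (dmap (matprod (take i ss))) \<in> {inverse B..B}"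
  shows "\<exists>a X Y. matprod ss = solmat a X Y \<and> absv X \<le> B \<and> absv Y \<le> B"
  using assms(2,3)
proof (induction ss rule: rev_induct)
  case Nil
  show ?case
    using assms(1) by (intro exI[of _ 1] exI[of _ 0]) (simp add: matprod_Nil)
next
  case (snoc s ss)
  have prefixes: "\<forall>i\<in>{1..length ss}. absv (dmap (matprod (take i ss))) \<in> {inverse B..B}"
  proof
    fix i
    assume "i \<in> {1..length ss}"
    then show "absv (dmap (matprod (take i ss))) \<in> {inverse B..B}"
      using snoc.prems(2)[rule_format, of i] by simp
  qed
  with snoc obtain a X Y where P: "matprod ss = solmat a X Y" "absv X \<le> B" "absv Y \<le> B"
    by auto
  from snoc.prems(1) obtain b x y where s: "s = solmat b x y"
    "absv x \<le> max 1 (absv b)" "absv y \<le> max 1 (absv (inverse b))"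
    by (auto simp: translation_dominated_def)
  have a: "absv a \<in> {inverse B..B}"
  proof (cases "ss = []")
    case True
    then show ?thesis
      using P(1) assms(1) by (simp add: matprod_Nil solmat_eq_iff absv_1 inverse_le_1_iff)
  next
    case False
    then show ?thesis
      using prefixes[rule_format, of "length ss"] P(1) by (simp add: Suc_le_eq)
  qed
  have product: "matprod (ss @ [s]) = solmat (a * b) (a * x + X) (inverse a * y + Y)"
    by (simp add: P(1) s(1) matprod_append_single solmat_mult)
  have ab: "absv (a * b) \<in> {inverse B..B}"
    using snoc.prems(2)[rule_format, of "length ss + 1"] product by simp
  have "0 < B"
    using assms(1) by simp
  with a ab have inverses: "absv (inverse a) \<le> B" "absv (inverse a * inverse b) \<le> B"
    by (simp_all add: absv_inverse_le flip: inverse_mult_distrib)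
  have "absv (a * x + X) \<le> B"
    using a ab s(2) P(2) by (intro absv_mult_add_le[where e = b]) auto
  moreover have "absv (inverse a * y + Y) \<le> B"
    using inverses s(3) P(3) by (intro absv_mult_add_le[where e = "inverse b"])
  ultimately show ?case
    using product by (intro exI[of _ "a * b"] exI[of _ "a * x + X"] exI[of _ "inverse a * y + Y"]) simp
qed

end

theorem lemma3:
  fixes modK :: "'a::field \<Rightarrow> real" and q :: nat and piK :: 'a
    and n :: nat and ss :: "('a^3^3) list"
  assumes "nonarch_local_field modK q piK"
    and "n > 0"
    and "ss \<noteq> []"
    and "set ss \<subseteq> Vset modK piK"
    and "\<forall>i\<in>{1..length ss}.
           modK (dmap (matprod (take i ss))) \<in> {real q powi (- int n) .. real q ^ n}"
  shows "matprod ss \<in> Omega modK q piK n"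
proof -
  interpret ultrametric_abs modK
    using assms(1) by (rule nonarch_local_field_ultrametric_abs)
  have q: "2 \<le> q" "modK piK = inverse (real q)"
    using assms(1) by (simp_all add: nonarch_local_field_def inverse_eq_divide)
  then have "piK \<noteq> 0"
    by auto
  have range: "{real q powi (- int n) .. real q ^ n} = {inverse (real q ^ n) .. real q ^ n}"
    by (simp add: power_int_minus)
  have B: "1 \<le> real q ^ n"
    using q(1) by simp
  moreover have "\<forall>s\<in>set ss. translation_dominated modK s"
    using assms(4) translation_dominated_Vset by blast
  ultimately obtain a X Y where
    P: "matprod ss = solmat a X Y" "modK X \<le> real q ^ n" "modK Y \<le> real q ^ n"
    using matprod_translation_bounded assms(5) unfolding range by blast
  have "modK a \<in> {real q powi (- int n) .. real q ^ n}"
    using assms(3) assms(5)[rule_format, of "length ss"] P(1) by (simp add: Suc_le_eq)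
  moreover have "a \<noteq> 0"
    using calculation B by (intro notI) (simp add: power_int_minus)
  moreover have "X \<in> (\<lambda>r. piK powi (- int n) * r) ` ring_of_integers modK"
    and "Y \<in> (\<lambda>r. piK powi (- int n) * r) ` ring_of_integers modK"
    using P(2,3) q(2) \<open>piK \<noteq> 0\<close> by (simp_all add: mem_scaled_integers)
  ultimately show ?thesis
    unfolding Omega_def P(1) by blast
qed

end
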